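(* Let $(A,E,\varepsilon,\tau)$ be an analytical $B$-$B$-non-commutative probability space and let $\widetilde{E}:L_2(A,\tau)\to L_2(B,\tau_B)$ denote the orthogonal projection. For all $a\in A$, $b,b_1,b_2\in B$, $\xi,\xi_1,\xi_2\in L_2(A,\tau)$ and $\zeta\in L_2(B,\tau_B)$: (i) $\tau(\xi)=\tau_B(\widetilde{E}(\xi))$; (ii) $\widetilde{E}(aL_b)=\widetilde{E}(aR_b)$; (iii) $\widetilde{E}(L_{b_1}R_{b_2}\xi)=b_1\widetilde{E}(\xi)b_2$; (iv) if $a\in A_\ell$, then $\widetilde{E}(a\zeta)=E(a)\zeta$; (v) if $a\in A_r$, then $\widetilde{E}(a\zeta)=\zeta E(a)$; (vi) if $\tau(L_b\xi_1)=\tau(L_b\xi_2)$ for all $b\in B$, then $\widetilde{E}(\xi_1)=\widetilde{E}(\xi_2)$; (vii) if $\tau(R_b\xi_1)=\tau(R_b\xi_2)$ for all $b\in B$, then $\widetilde{E}(\xi_1)=\widetilde{E}(\xi_2)$.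
   Context: Let $B$ be a unital $*$-algebra. A $B$-$B$-non-commutative probability space is a triple $(A,E,\varepsilon)$: $A$ a unital $*$-algebra, $\varepsilon:B\otimes B^{\mathrm{op}}\to A$ a unital $*$-homomorphism injective on $B\otimes 1$ and on $1\otimes B^{\mathrm{op}}$, and $E:A\to B$ unital linear with $E(\varepsilon(b_1\otimes b_2)a)=b_1E(a)b_2$ and $E(a\varepsilon(b\otimes 1))=E(a\varepsilon(1\otimes b))$. Write $L_b=\varepsilon(b\otimes1)$, $R_b=\varepsilon(1\otimes b)$, $A_\ell$ for the commutant of $\{R_b\}$ and $A_r$ for the commutant of $\{L_b\}$ in $A$. An analytical $B$-$B$-non-commutative probability space is $(A,E,\varepsilon,\tau)$ where $\tau$ is a state on $A$ with $\tau(a)=\tau(L_{E(a)})=\tau(R_{E(a)})$, $\tau_B(b):=\tau(L_b)$ is a tracial state on $B$, left multiplication by each $a\in A$ is bounded on $A/N_\tau$ ($N_\tau=\{a:\tau(a^*a)=0\}$) and so extends to a bounded operator on the Hilbert space $L_2(A,\tau)$ (completion of $A/N_\tau$ with $\langle a_1,a_2\rangle=\tau(a_2^*a_1)$), and $E$ is completely positive on $A_\ell$ and on $A_r$. Elements of $A$ are written for their classes in $L_2(A,\tau)$. $L_2(B,\tau_B)$ is identified with the closure of $\{L_b+N_\tau\}$ in $L_2(A,\tau)$; left and right multiplication by elements of $B$ extend to bounded operators on $L_2(B,\tau_B)$, and for $\zeta\in L_2(B,\tau_B)$ one has $L_{b_1}R_{b_2}\zeta=b_1\zeta b_2$. For $\xi\in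 L_2(A,\tau)$, $\tau(\xi):=\langle \xi,1_A+N_\tau\rangle$, and $\tau_B(\zeta)=\tau(\zeta)$ for $\zeta\in L_2(B,\tau_B)$. *)

theory Defs
  imports Complex_Main
begin

(* Complex *-algebras are modelled as a ring type together with an explicit
   complex scalar multiplication sm and an involution st. *)
definition star_algebra :: "(complex \<Rightarrow> 'a::ring_1 \<Rightarrow> 'a) \<Rightarrow> ('a \<Rightarrow> 'a) \<Rightarrow> bool" where
  "star_algebra sm st \<longleftrightarrow>
     (\<forall>x. sm 1 x = x) \<and> (\<forall>c d x. sm c (sm d x) = sm (c * d) x) \<and>
     (\<forall>c d x. sm (c + d) x = sm c x + sm d x) \<and> (\<forall>c x y. sm c (x + y) = sm c x + sm c y) \<and>
     (\<forall>c x y. sm c (x * y) = sm c x * y) \<and> (\<forall>c x y. sm c (x * y) = x * sm c y) \<and>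
     (\<forall>x. st (st x) = x) \<and> (\<forall>x y. st (x + y) = st x + st y) \<and>
     (\<forall>x y. st (x * y) = st y * st x) \<and> (\<forall>c x. st (sm c x) = sm (cnj c) (st x))"

definition is_clinear :: "(complex \<Rightarrow> 'a::ab_group_add \<Rightarrow> 'a) \<Rightarrow> (complex \<Rightarrow> 'c::ab_group_add \<Rightarrow> 'c) \<Rightarrow> ('a \<Rightarrow> 'c) \<Rightarrow> bool" where
  "is_clinear s1 s2 f \<longleftrightarrow> (\<forall>x y. f (x + y) = f x + f y) \<and> (\<forall>c x. f (s1 c x) = s2 c (f x))"

definition unital_star_hom ::
  "(complex \<Rightarrow> 'b::ring_1 \<Rightarrow> 'b) \<Rightarrow> ('b \<Rightarrow> 'b) \<Rightarrow> (complex \<Rightarrow> 'a::ring_1 \<Rightarrow> 'a) \<Rightarrow> ('a \<Rightarrow> 'a) \<Rightarrow> ('b \<Rightarrow> 'a) \<Rightarrow> bool" where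
  "unital_star_hom smB stB smA stA f \<longleftrightarrow> is_clinear smB smA f \<and> f 1 = 1 \<and>
     (\<forall>x y. f (x * y) = f x * f y) \<and> (\<forall>x. f (stB x) = stA (f x))"

(* unital *-homomorphism B^op \<rightarrow> A, i.e. anti-multiplicative on B *)
definition unital_star_antihom ::
  "(complex \<Rightarrow> 'b::ring_1 \<Rightarrow> 'b) \<Rightarrow> ('b \<Rightarrow> 'b) \<Rightarrow> (complex \<Rightarrow> 'a::ring_1 \<Rightarrow> 'a) \<Rightarrow> ('a \<Rightarrow> 'a) \<Rightarrow> ('b \<Rightarrow> 'a) \<Rightarrow> bool" where
  "unital_star_antihom smB stB smA stA f \<longleftrightarrow> is_clinear smB smA f \<and> f 1 = 1 \<and>
     (\<forall>x y. f (x * y) = f y * f x) \<and> (\<forall>x. f (stB x) = stA (f x))"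

(* B-B-non-commutative probability space; \<epsilon>(b1 \<otimes> b2) = L b1 * R b2 *)
definition BB_ncps ::
  "(complex \<Rightarrow> 'a::ring_1 \<Rightarrow> 'a) \<Rightarrow> ('a \<Rightarrow> 'a) \<Rightarrow> (complex \<Rightarrow> 'b::ring_1 \<Rightarrow> 'b) \<Rightarrow> ('b \<Rightarrow> 'b) \<Rightarrow>
   ('b \<Rightarrow> 'a) \<Rightarrow> ('b \<Rightarrow> 'a) \<Rightarrow> ('a \<Rightarrow> 'b) \<Rightarrow> bool" where
  "BB_ncps smA stA smB stB L R E \<longleftrightarrow>
     star_algebra smA stA \<and> star_algebra smB stB \<and>
     unital_star_hom smB stB smA stA L \<and> unital_star_antihom smB stB smA stA R \<and>
     (\<forall>b1 b2. L b1 * R b2 = R b2 * L b1) \<and> inj L \<and> inj R \<and>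
     is_clinear smA smB E \<and> E 1 = 1 \<and>
     (\<forall>b1 b2 a. E (L b1 * R b2 * a) = b1 * E a * b2) \<and>
     (\<forall>a b. E (a * L b) = E (a * R b))"

definition left_alg :: "('b \<Rightarrow> 'a::ring_1) \<Rightarrow> 'a set" where
  "left_alg R = {a. \<forall>b. a * R b = R b * a}"

definition right_alg :: "('b \<Rightarrow> 'a::ring_1) \<Rightarrow> 'a set" where
  "right_alg L = {a. \<forall>b. a * L b = L b * a}"

definition pos_matrix :: "('a::ring_1 \<Rightarrow> 'a) \<Rightarrow> 'a set \<Rightarrow> nat \<Rightarrow> (nat \<Rightarrow> nat \<Rightarrow> 'a) \<Rightarrow> bool" where
  "pos_matrix st S n X \<longleftrightarrow> (\<exists>(m::nat) C. (\<forall>p<m. \<forall>l<n. \<forall>i<n. C p l i \<in> S) \<and>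
     (\<forall>i<n. \<forall>j<n. X i j = (\<Sum>p<m. \<Sum>l<n. st (C p l i) * C p l j)))"

definition completely_positive_on :: "('a::ring_1 \<Rightarrow> 'a) \<Rightarrow> ('b::ring_1 \<Rightarrow> 'b) \<Rightarrow> 'a set \<Rightarrow> ('a \<Rightarrow> 'b) \<Rightarrow> bool" where
  "completely_positive_on stA stB S E \<longleftrightarrow>
     (\<forall>n X. (\<forall>i<n. \<forall>j<n. X i j \<in> S) \<longrightarrow> pos_matrix stA S n X \<longrightarrow> pos_matrix stB UNIV n (\<lambda>i j. E (X i j)))"

definition is_state :: "(complex \<Rightarrow> 'a::ring_1 \<Rightarrow> 'a) \<Rightarrow> ('a \<Rightarrow> 'a) \<Rightarrow> ('a \<Rightarrow> complex) \<Rightarrow> bool" where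
  "is_state sm st \<phi> \<longleftrightarrow> is_clinear sm (*) \<phi> \<and> \<phi> 1 = 1 \<and>
     (\<forall>a. Im (\<phi> (st a * a)) = 0 \<and> Re (\<phi> (st a * a)) \<ge> 0)"

definition analytical_BB_ncps ::
  "(complex \<Rightarrow> 'a::ring_1 \<Rightarrow> 'a) \<Rightarrow> ('a \<Rightarrow> 'a) \<Rightarrow> (complex \<Rightarrow> 'b::ring_1 \<Rightarrow> 'b) \<Rightarrow> ('b \<Rightarrow> 'b) \<Rightarrow>
   ('b \<Rightarrow> 'a) \<Rightarrow> ('b \<Rightarrow> 'a) \<Rightarrow> ('a \<Rightarrow> 'b) \<Rightarrow> ('a \<Rightarrow> complex) \<Rightarrow> bool" where
  "analytical_BB_ncps smA stA smB stB L R E \<tau> \<longleftrightarrow>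
     BB_ncps smA stA smB stB L R E \<and>
     is_state smA stA \<tau> \<and>
     (\<forall>a. \<tau> a = \<tau> (L (E a)) \<and> \<tau> a = \<tau> (R (E a))) \<and>
     is_state smB stB (\<lambda>b. \<tau> (L b)) \<and> (\<forall>b1 b2. \<tau> (L (b1 * b2)) = \<tau> (L (b2 * b1))) \<and>
     (\<forall>a. \<exists>C. \<forall>x. Re (\<tau> (stA (a * x) * (a * x))) \<le> C * Re (\<tau> (stA x * x))) \<and>
     completely_positive_on stA stB (left_alg R) E \<and>
     completely_positive_on stA stB (right_alg L) E"

definition hnorm :: "('h \<Rightarrow> 'h \<Rightarrow> complex) \<Rightarrow> 'h \<Rightarrow> real" where
  "hnorm ip x = sqrt (Re (ip x x))"

definition complex_hilbert :: "(complex \<Rightarrow> 'h::ab_group_add \<Rightarrow> 'h) \<Rightarrow> ('h \<Rightarrow> 'h \<Rightarrow> complex) \<Rightarrow> bool" where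
  "complex_hilbert sm ip \<longleftrightarrow>
     (\<forall>x. sm 1 x = x) \<and> (\<forall>c d x. sm c (sm d x) = sm (c * d) x) \<and>
     (\<forall>c d x. sm (c + d) x = sm c x + sm d x) \<and> (\<forall>c x y. sm c (x + y) = sm c x + sm c y) \<and>
     (\<forall>x y z. ip (x + y) z = ip x z + ip y z) \<and> (\<forall>c x y. ip (sm c x) y = c * ip x y) \<and>
     (\<forall>x y. ip x y = cnj (ip y x)) \<and> (\<forall>x. Re (ip x x) \<ge> 0) \<and> (\<forall>x. ip x x = 0 \<longrightarrow> x = 0) \<and>
     (\<forall>X::nat \<Rightarrow> 'h. (\<forall>e>0. \<exists>N. \<forall>m\<ge>N. \<forall>n\<ge>N. hnorm ip (X m - X n) < e) \<longrightarrow>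
          (\<exists>l. \<forall>e>0. \<exists>N. \<forall>n\<ge>N. hnorm ip (X n - l) < e))"

definition bounded_op :: "(complex \<Rightarrow> 'h::ab_group_add \<Rightarrow> 'h) \<Rightarrow> ('h \<Rightarrow> 'h \<Rightarrow> complex) \<Rightarrow> ('h \<Rightarrow> 'h) \<Rightarrow> bool" where
  "bounded_op sm ip T \<longleftrightarrow> is_clinear sm sm T \<and> (\<exists>C. \<forall>x. hnorm ip (T x) \<le> C * hnorm ip x)"

(* (H, sH, ip, \<iota>) is L_2(A,\<tau>): \<iota> a is the class a + N_\<tau>, with dense range in the complete space H;
   lam a is the bounded extension of left multiplication by a. *)
definition L2_space ::
  "(complex \<Rightarrow> 'a::ring_1 \<Rightarrow> 'a) \<Rightarrow> ('a \<Rightarrow> 'a) \<Rightarrow> ('a \<Rightarrow> complex) \<Rightarrow>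
   (complex \<Rightarrow> 'h::ab_group_add \<Rightarrow> 'h) \<Rightarrow> ('h \<Rightarrow> 'h \<Rightarrow> complex) \<Rightarrow> ('a \<Rightarrow> 'h) \<Rightarrow> ('a \<Rightarrow> 'h \<Rightarrow> 'h) \<Rightarrow> bool" where
  "L2_space smA stA \<tau> sH ip \<iota> lam \<longleftrightarrow>
     complex_hilbert sH ip \<and> is_clinear smA sH \<iota> \<and>
     (\<forall>x y. ip (\<iota> x) (\<iota> y) = \<tau> (stA y * x)) \<and>
     (\<forall>\<xi> e. e > 0 \<longrightarrow> (\<exists>x. hnorm ip (\<xi> - \<iota> x) < e)) \<and>
     (\<forall>a. bounded_op sH ip (lam a) \<and> (\<forall>x. lam a (\<iota> x) = \<iota> (a * x)))"

(* L_2(B,\<tau>_B): closure of {L_b + N_\<tau>} *)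
definition L2B :: "('h::ab_group_add \<Rightarrow> 'h \<Rightarrow> complex) \<Rightarrow> ('a \<Rightarrow> 'h) \<Rightarrow> ('b \<Rightarrow> 'a) \<Rightarrow> 'h set" where
  "L2B ip \<iota> L = {\<xi>. \<forall>e>0. \<exists>b. hnorm ip (\<xi> - \<iota> (L b)) < e}"

definition orth_proj :: "('h::ab_group_add \<Rightarrow> 'h \<Rightarrow> complex) \<Rightarrow> 'h set \<Rightarrow> 'h \<Rightarrow> 'h" where
  "orth_proj ip K \<xi> = (THE \<eta>. \<eta> \<in> K \<and> (\<forall>\<kappa>\<in>K. ip (\<xi> - \<eta>) \<kappa> = 0))"

definition tauH :: "('h \<Rightarrow> 'h \<Rightarrow> complex) \<Rightarrow> ('a::ring_1 \<Rightarrow> 'h) \<Rightarrow> 'h \<Rightarrow> complex" where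
  "tauH ip \<iota> \<xi> = ip \<xi> (\<iota> 1)"

end

theory Submission
  imports Defs
begin

(* The conditional expectation E~ is the orthogonal projection onto the closure of
   {L_b + N_tau}, so E~ xi is the unique element of L_2(B) such that xi - E~ xi is orthogonal
   to every L_b; every item therefore reduces to computing inner products with the L_b.
   The basic identity is tau(x R_b) = tau(x L_b), which follows from tau = tau o L o E and
   E(x L_b) = E(x R_b); applied to x = (R_b - L_b)^* it shows that R_b and L_b define the same
   vector of L_2(A), which gives (ii) and lets L_b1 R_b2 act on L_2(B).  The adjoint of
   L_b1 R_b2 is L_b1^* R_b2^*, which maps L_2(B) into itself, giving (iii); for (iv) and (v)
   the operators a and L_E(a), resp. R_E(a), have the same B-moments tau(L_c a L_b); and
   (vi), (vii) hold because tau(L_b xi) = tau(R_b xi) = <xi, L_b^*>. *)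

section \<open>Orthogonal projections in a complex Hilbert space\<close>

locale complex_hilbert_space =
  fixes sm :: "complex \<Rightarrow> 'h::ab_group_add \<Rightarrow> 'h" and ip :: "'h \<Rightarrow> 'h \<Rightarrow> complex"
  assumes complex_hilbert: "complex_hilbert sm ip"
begin

abbreviation hn :: "'h \<Rightarrow> real" where "hn x \<equiv> hnorm ip x"
abbreviation sqnorm :: "'h \<Rightarrow> real" where "sqnorm x \<equiv> Re (ip x x)"

sublocale module sm
proof
  show "sm c (x + y) = sm c x + sm c y" "sm (c + d) x = sm c x + sm d x"
    "sm c (sm d x) = sm (c * d) x" "sm 1 x = x" for c d x y
    using complex_hilbert unfolding complex_hilbert_def by simp_all
qed

lemma ip_add_left: "ip (x + y) z = ip x z + ip y z"
  using complex_hilbert unfolding complex_hilbert_def by blast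

lemma ip_scale_left [simp]: "ip (sm c x) y = c * ip x y"
  using complex_hilbert unfolding complex_hilbert_def by blast

lemma ip_cnj: "ip x y = cnj (ip y x)"
  using complex_hilbert unfolding complex_hilbert_def by blast

lemma sqnorm_nonneg: "0 \<le> sqnorm x"
  using complex_hilbert unfolding complex_hilbert_def by blast

lemma ip_self_eq_0D: "ip x x = 0 \<Longrightarrow> x = 0"
  using complex_hilbert unfolding complex_hilbert_def by blast

lemma Cauchy_convergent:
  fixes X :: "nat \<Rightarrow> 'h"
  assumes "\<forall>e>0. \<exists>N. \<forall>m\<ge>N. \<forall>n\<ge>N. hn (X m - X n) < e"
  shows "\<exists>l. \<forall>e>0. \<exists>N. \<forall>n\<ge>N. hn (X n - l) < e"
proof -
  have "\<forall>X::nat \<Rightarrow> 'h. (\<forall>e>0. \<exists>N. \<forall>m\<ge>N. \<forall>n\<ge>N. hn (X m - X n) < e) \<longrightarrow>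
          (\<exists>l. \<forall>e>0. \<exists>N. \<forall>n\<ge>N. hn (X n - l) < e)"
    using complex_hilbert unfolding complex_hilbert_def by blast
  then show ?thesis using assms by blast
qed

lemma ip_diff_left: "ip (x - y) z = ip x z - ip y z"
  using ip_add_left[of "x - y" y z] by (simp add: eq_diff_eq)

lemma ip_zero_left [simp]: "ip 0 z = 0"
  using ip_diff_left[of 0 0 z] by simp

lemma ip_minus_left [simp]: "ip (- x) z = - ip x z"
  using ip_diff_left[of 0 x z] by simp

lemma ip_add_right: "ip z (x + y) = ip z x + ip z y"
  by (metis complex_cnj_add ip_add_left ip_cnj)

lemma ip_diff_right: "ip z (x - y) = ip z x - ip z y"
  by (metis complex_cnj_diff ip_diff_left ip_cnj)

lemma ip_zero_right [simp]: "ip z 0 = 0"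
  using ip_diff_right[of z 0 0] by simp

lemma ip_minus_right [simp]: "ip z (- x) = - ip z x"
  using ip_diff_right[of z 0 x] by simp

lemma ip_scale_right [simp]: "ip x (sm c y) = cnj c * ip x y"
  by (metis complex_cnj_mult ip_cnj ip_scale_left)

lemma ip_self_real: "ip x x = of_real (sqnorm x)"
  using ip_cnj[of x x]
  by (metis Im_complex_of_real Re_complex_of_real cnj.sel(2) complex_eqI neg_equal_zero)

lemma sqnorm_eq_0_iff: "sqnorm x = 0 \<longleftrightarrow> x = 0"
  using ip_self_real[of x] ip_self_eq_0D by auto

lemma hnorm_nonneg: "0 \<le> hn x"
  unfolding hnorm_def using sqnorm_nonneg by simp

lemma hnorm_sq: "(hn x)\<^sup>2 = sqnorm x"
  unfolding hnorm_def using sqnorm_nonneg by simp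

lemma hnorm_less_if_sqnorm_less: "sqnorm x < e\<^sup>2 \<Longrightarrow> 0 < e \<Longrightarrow> hn x < e"
  by (metis hnorm_sq less_imp_le power_less_imp_less_base)

lemma sqnorm_add_scale:
  "sqnorm (x + sm c y) = sqnorm x + 2 * Re (cnj c * ip x y) + (cmod c)\<^sup>2 * sqnorm y"
proof -
  have "ip (x + sm c y) (x + sm c y) = ip x x + cnj c * ip x y + c * ip y x + c * cnj c * ip y y"
    by (simp add: ip_add_left ip_add_right algebra_simps)
  moreover have "Re (c * ip y x) = Re (cnj c * ip x y)"
    by (metis complex_cnj_cnj complex_cnj_mult cnj.simps(1) ip_cnj)
  moreover have "c * cnj c * ip y y = of_real ((cmod c)\<^sup>2 * sqnorm y)"
    by (metis complex_norm_square ip_self_real of_real_mult)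
  ultimately show ?thesis by simp
qed

lemma sqnorm_add: "sqnorm (x + y) = sqnorm x + 2 * Re (ip x y) + sqnorm y"
  using sqnorm_add_scale[of x 1 y] by simp

lemma sqnorm_diff: "sqnorm (x - y) = sqnorm x - 2 * Re (ip x y) + sqnorm y"
  using sqnorm_add_scale[of x "-1" y] by simp

lemma sqnorm_scale: "sqnorm (sm c x) = (cmod c)\<^sup>2 * sqnorm x"
  using sqnorm_add_scale[of 0 c x] by simp

lemma hnorm_scale: "hn (sm c x) = cmod c * hn x"
  unfolding hnorm_def using sqnorm_scale[of c x] by (simp add: real_sqrt_mult)

lemma hnorm_minus_commute: "hn (x - y) = hn (y - x)"
  unfolding hnorm_def by (metis ip_minus_left ip_minus_right minus_diff_eq minus_minus)

lemma sqnorm_minus_commute: "sqnorm (x - y) = sqnorm (y - x)"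
  by (metis hnorm_minus_commute hnorm_sq)

lemma parallelogram: "sqnorm (x + y) + sqnorm (x - y) = 2 * sqnorm x + 2 * sqnorm y"
  by (simp add: sqnorm_add sqnorm_diff)

lemma Cauchy_Schwarz: "cmod (ip x y) \<le> hn x * hn y"
proof -
  have "(cmod (ip x y))\<^sup>2 \<le> sqnorm x * sqnorm y"
  proof (cases "y = 0")
    case False
    then have y: "sqnorm y > 0" using sqnorm_nonneg[of y] sqnorm_eq_0_iff by fastforce
    define p where "p = ip x y"
    define c where "c = - p / of_real (sqnorm y)"
    have "0 \<le> sqnorm (x + sm c y)" by (rule sqnorm_nonneg)
    also have "\<dots> = sqnorm x + 2 * Re (cnj c * p) + (cmod c)\<^sup>2 * sqnorm y"
      unfolding p_def by (rule sqnorm_add_scale)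
    also have "cnj c * p = - of_real ((cmod p)\<^sup>2 / sqnorm y)"
      unfolding c_def using y complex_norm_square[of p] by (simp add: field_simps mult.commute)
    also have "(cmod c)\<^sup>2 = (cmod p)\<^sup>2 / (sqnorm y)\<^sup>2"
      unfolding c_def using y by (simp add: norm_divide power_divide)
    finally have "0 \<le> sqnorm x - (cmod p)\<^sup>2 / sqnorm y"
      using y by (simp add: power2_eq_square field_simps)
    then show ?thesis unfolding p_def using y by (simp add: field_simps)
  qed (simp)
  then have "(cmod (ip x y))\<^sup>2 \<le> (hn x * hn y)\<^sup>2" by (simp add: power_mult_distrib hnorm_sq)
  then show ?thesis using hnorm_nonneg by (meson mult_nonneg_nonneg power2_le_imp_le)
qed

lemma hnorm_triangle: "hn (x + y) \<le> hn x + hn y"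
proof -
  have "Re (ip x y) \<le> hn x * hn y" using Cauchy_Schwarz complex_Re_le_cmod order_trans by blast
  then have "(hn (x + y))\<^sup>2 \<le> (hn x + hn y)\<^sup>2" by (simp add: hnorm_sq sqnorm_add power2_sum)
  then show ?thesis using hnorm_nonneg by (meson add_nonneg_nonneg power2_le_imp_le)
qed

lemma hnorm_triangle_diff: "hn (x - z) \<le> hn (x - y) + hn (y - z)"
  using hnorm_triangle[of "x - y" "y - z"] by simp

lemma scale_two: "sm 2 x = x + x"
  using scale_left_distrib[of 1 1 x] by simp

lemma bounded_additive_zero_by_density:
  fixes g :: "'h \<Rightarrow> complex"
  assumes "additive g" and bound: "\<And>u. cmod (g u) \<le> M * hn u"
    and approx: "\<And>e. 0 < e \<Longrightarrow> \<exists>s. g s = 0 \<and> hn (\<xi> - s) < e"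
  shows "g \<xi> = 0"
proof -
  define M' where "M' = max M 1"
  have M': "0 < M'" unfolding M'_def by simp
  have "cmod (g \<xi>) \<le> 0 + e" if "0 < e" for e
  proof -
    obtain s where s: "g s = 0" "hn (\<xi> - s) < e / M'"
      using approx[of "e / M'"] \<open>0 < e\<close> M' by auto
    have "cmod (g \<xi>) = cmod (g (\<xi> - s))" using additive.diff[OF assms(1)] s by simp
    also have "\<dots> \<le> M' * hn (\<xi> - s)"
      using bound[of "\<xi> - s"] hnorm_nonneg[of "\<xi> - s"] unfolding M'_def
      by (smt (verit) mult_right_mono)
    also have "\<dots> < e" using s(2) M' by (simp add: pos_less_divide_eq mult.commute)
    finally show ?thesis by simp
  qed
  then show ?thesis by (metis field_le_epsilon norm_le_zero_iff)
qed

definition closed_subspace :: "'h set \<Rightarrow> bool" where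
  "closed_subspace K \<longleftrightarrow>
     0 \<in> K \<and> (\<forall>x\<in>K. \<forall>y\<in>K. x + y \<in> K) \<and> (\<forall>c. \<forall>x\<in>K. sm c x \<in> K) \<and>
     (\<forall>\<xi>. (\<forall>e>0. \<exists>\<kappa>\<in>K. hn (\<xi> - \<kappa>) < e) \<longrightarrow> \<xi> \<in> K)"

lemma closed_subspace_zero: "closed_subspace K \<Longrightarrow> 0 \<in> K"
  unfolding closed_subspace_def by blast

lemma closed_subspace_add: "closed_subspace K \<Longrightarrow> x \<in> K \<Longrightarrow> y \<in> K \<Longrightarrow> x + y \<in> K"
  unfolding closed_subspace_def by blast

lemma closed_subspace_scale: "closed_subspace K \<Longrightarrow> x \<in> K \<Longrightarrow> sm c x \<in> K"
  unfolding closed_subspace_def by blast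

lemma closed_subspace_closed:
  "closed_subspace K \<Longrightarrow> (\<And>e. 0 < e \<Longrightarrow> \<exists>\<kappa>\<in>K. hn (\<xi> - \<kappa>) < e) \<Longrightarrow> \<xi> \<in> K"
  unfolding closed_subspace_def by blast

lemma closed_subspace_diff:
  assumes "closed_subspace K" "x \<in> K" "y \<in> K"
  shows "x - y \<in> K"
  using closed_subspace_add[OF assms(1,2) closed_subspace_scale[OF assms(1,3), of "- 1"]] by simp

lemma sqnorm_diff_le_apollonius:
  assumes K: "closed_subspace K" and "x \<in> K" "y \<in> K"
    and d: "\<forall>\<kappa>\<in>K. d \<le> sqnorm (\<xi> - \<kappa>)"
  shows "sqnorm (x - y) \<le> 2 * sqnorm (\<xi> - x) + 2 * sqnorm (\<xi> - y) - 4 * d"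
proof -
  define m where "m = sm (1/2) (x + y)"
  have "m \<in> K"
    unfolding m_def using K assms(2,3) by (simp add: closed_subspace_add closed_subspace_scale)
  then have "d \<le> sqnorm (\<xi> - m)" using d by blast
  have "(\<xi> - x) + (\<xi> - y) = sm 2 (\<xi> - m)"
    unfolding m_def by (simp add: scale_right_diff_distrib scale_two)
  then have "sqnorm ((\<xi> - x) + (\<xi> - y)) = 4 * sqnorm (\<xi> - m)" by (simp add: sqnorm_scale)
  moreover have "sqnorm ((\<xi> - x) - (\<xi> - y)) = sqnorm (x - y)"
    using sqnorm_minus_commute[of y x] by simp
  ultimately show ?thesis using parallelogram[of "\<xi> - x" "\<xi> - y"] \<open>d \<le> sqnorm (\<xi> - m)\<close>
    by linarith
qed

lemma minimizing_sequence_Cauchy: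
  assumes K: "closed_subspace K" and f: "\<And>k. f k \<in> K"
    and d: "\<forall>\<kappa>\<in>K. d \<le> sqnorm (\<xi> - \<kappa>)"
    and f_min: "\<And>k. sqnorm (\<xi> - f k) < d + inverse (real (Suc k))"
  shows "\<forall>e>0. \<exists>N. \<forall>m\<ge>N. \<forall>n\<ge>N. hn (f m - f n) < e"
proof (intro allI impI)
  fix e :: real assume "0 < e"
  then obtain N where N: "inverse (real (Suc N)) < e\<^sup>2 / 4"
    using reals_Archimedean[of "e\<^sup>2 / 4"] by auto
  have "hn (f m - f n) < e" if "N \<le> m" "N \<le> n" for m n
  proof (rule hnorm_less_if_sqnorm_less[OF _ \<open>0 < e\<close>])
    have "inverse (real (Suc m)) \<le> inverse (real (Suc N))"
      "inverse (real (Suc n)) \<le> inverse (real (Suc N))"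
      using that by (simp_all add: le_imp_inverse_le)
    then show "sqnorm (f m - f n) < e\<^sup>2"
      using sqnorm_diff_le_apollonius[OF K f f d, of m n] f_min[of m] f_min[of n] N by linarith
  qed
  then show "\<exists>N. \<forall>m\<ge>N. \<forall>n\<ge>N. hn (f m - f n) < e" by blast
qed

lemma sqnorm_le_at_limit:
  assumes f: "\<And>n. sqnorm (\<xi> - f n) < d + inverse (real (Suc n))" and "0 \<le> d"
    and lim: "(\<lambda>n. hn (f n - l)) \<longlonglongrightarrow> 0"
  shows "sqnorm (\<xi> - l) \<le> d"
proof -
  have "hn (\<xi> - l) \<le> sqrt d"
  proof (rule LIMSEQ_le_const)
    show "(\<lambda>n. sqrt (d + inverse (real (Suc n))) + hn (f n - l)) \<longlonglongrightarrow> sqrt d"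
      using tendsto_add[OF tendsto_real_sqrt[OF LIMSEQ_inverse_real_of_nat_add] lim] by simp
    have "hn (\<xi> - l) \<le> sqrt (d + inverse (real (Suc n))) + hn (f n - l)" for n
    proof -
      have "hn (\<xi> - f n) \<le> sqrt (d + inverse (real (Suc n)))"
        unfolding hnorm_def using f[of n] by simp
      then show ?thesis using hnorm_triangle_diff[of \<xi> l "f n"] by linarith
    qed
    then show "\<exists>N. \<forall>n\<ge>N. hn (\<xi> - l) \<le> sqrt (d + inverse (real (Suc n))) + hn (f n - l)"
      by blast
  qed
  then show ?thesis using hnorm_nonneg \<open>0 \<le> d\<close> by (metis hnorm_sq power_mono real_sqrt_pow2)
qed

lemma closed_subspace_nearest_point:
  assumes K: "closed_subspace K"
  shows "\<exists>l\<in>K. \<forall>\<kappa>\<in>K. sqnorm (\<xi> - l) \<le> sqnorm (\<xi> - \<kappa>)"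
proof -
  define d where "d = (INF \<kappa>\<in>K. sqnorm (\<xi> - \<kappa>))"
  have "K \<noteq> {}" using closed_subspace_zero[OF K] by blast
  have bdd: "bdd_below ((\<lambda>\<kappa>. sqnorm (\<xi> - \<kappa>)) ` K)" by (rule bdd_belowI2) (rule sqnorm_nonneg)
  have d_le: "\<forall>\<kappa>\<in>K. d \<le> sqnorm (\<xi> - \<kappa>)" unfolding d_def using cINF_lower[OF bdd] by blast
  have "0 \<le> d" unfolding d_def using \<open>K \<noteq> {}\<close> by (rule cINF_greatest) (rule sqnorm_nonneg)
  have "\<exists>\<kappa>\<in>K. sqnorm (\<xi> - \<kappa>) < d + inverse (real (Suc k))" for k
    using cINF_less_iff[OF \<open>K \<noteq> {}\<close> bdd, of "d + inverse (real (Suc k))"]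
    unfolding d_def[symmetric] by simp
  then obtain f where f: "\<And>k. f k \<in> K" "\<And>k. sqnorm (\<xi> - f k) < d + inverse (real (Suc k))"
    by metis
  obtain l where l: "\<forall>e>0. \<exists>N. \<forall>n\<ge>N. hn (f n - l) < e"
    using Cauchy_convergent[OF minimizing_sequence_Cauchy[OF K f(1) d_le f(2)]] by blast
  have "l \<in> K"
  proof (rule closed_subspace_closed[OF K])
    fix e :: real assume "0 < e"
    then obtain N where "hn (f N - l) < e" using l by blast
    then show "\<exists>\<kappa>\<in>K. hn (l - \<kappa>) < e" using f(1) hnorm_minus_commute by metis
  qed
  have "(\<lambda>n. hn (f n - l)) \<longlonglongrightarrow> 0"
    using l unfolding lim_sequentially by (simp add: hnorm_nonneg)
  then have "sqnorm (\<xi> - l) \<le> d" by (rule sqnorm_le_at_limit[OF f(2) \<open>0 \<le> d\<close>])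
  then show ?thesis using \<open>l \<in> K\<close> d_le by force
qed

lemma nearest_point_orthogonal:
  assumes K: "closed_subspace K" and "l \<in> K" "\<kappa> \<in> K"
    and nearest: "\<forall>\<kappa>\<in>K. sqnorm (\<xi> - l) \<le> sqnorm (\<xi> - \<kappa>)"
  shows "ip (\<xi> - l) \<kappa> = 0"
proof (rule ccontr)
  \<comment> \<open>otherwise moving l by a small multiple of p \<kappa> brings it closer to \<xi>\<close>
  define p where "p = ip (\<xi> - l) \<kappa>"
  assume "ip (\<xi> - l) \<kappa> \<noteq> 0"
  then have p: "0 < (cmod p)\<^sup>2" unfolding p_def by simp
  define t :: real where "t = inverse (sqnorm \<kappa> + 1)"
  have t: "0 < t" "t * sqnorm \<kappa> < 1"
    unfolding t_def using sqnorm_nonneg[of \<kappa>] by (simp_all add: field_simps)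
  define c where "c = - (of_real t * p)"
  have "l - sm c \<kappa> \<in> K"
    using K \<open>l \<in> K\<close> \<open>\<kappa> \<in> K\<close> by (simp add: closed_subspace_diff closed_subspace_scale)
  then have "sqnorm (\<xi> - l) \<le> sqnorm (\<xi> - (l - sm c \<kappa>))"
    using nearest by blast
  also have "\<xi> - (l - sm c \<kappa>) = (\<xi> - l) + sm c \<kappa>" by simp
  also have "sqnorm ((\<xi> - l) + sm c \<kappa>)
      = sqnorm (\<xi> - l) + 2 * Re (cnj c * p) + (cmod c)\<^sup>2 * sqnorm \<kappa>"
    unfolding p_def by (rule sqnorm_add_scale)
  also have "cnj c * p = - of_real (t * (cmod p)\<^sup>2)"
    unfolding c_def using complex_norm_square[of p] by (simp add: mult.commute mult.left_commute)
  also have "(cmod c)\<^sup>2 = t\<^sup>2 * (cmod p)\<^sup>2"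
    unfolding c_def using t by (simp add: norm_mult power_mult_distrib)
  finally have "2 * t * (cmod p)\<^sup>2 \<le> t * (cmod p)\<^sup>2 * (t * sqnorm \<kappa>)"
    by (simp add: power2_eq_square algebra_simps)
  then have "2 \<le> t * sqnorm \<kappa>" using t p by (simp add: mult.assoc)
  then show False using t by simp
qed

lemma orthogonal_projection_unique:
  assumes "closed_subspace K"
    and "\<eta>1 \<in> K" "\<forall>\<kappa>\<in>K. ip (\<xi> - \<eta>1) \<kappa> = 0"
    and "\<eta>2 \<in> K" "\<forall>\<kappa>\<in>K. ip (\<xi> - \<eta>2) \<kappa> = 0"
  shows "\<eta>1 = \<eta>2"
proof -
  have "\<eta>1 - \<eta>2 \<in> K" using closed_subspace_diff assms by blast
  have "ip (\<eta>1 - \<eta>2) (\<eta>1 - \<eta>2) = ip (\<xi> - \<eta>2) (\<eta>1 - \<eta>2) - ip (\<xi> - \<eta>1) (\<eta>1 - \<eta>2)"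
    by (simp add: ip_diff_left)
  also have "\<dots> = 0" using assms \<open>\<eta>1 - \<eta>2 \<in> K\<close> by simp
  finally show ?thesis using ip_self_eq_0D[of "\<eta>1 - \<eta>2"] by simp
qed

lemma ex1_orthogonal_projection:
  assumes K: "closed_subspace K"
  shows "\<exists>!\<eta>. \<eta> \<in> K \<and> (\<forall>\<kappa>\<in>K. ip (\<xi> - \<eta>) \<kappa> = 0)"
proof -
  obtain l where "l \<in> K" "\<forall>\<kappa>\<in>K. sqnorm (\<xi> - l) \<le> sqnorm (\<xi> - \<kappa>)"
    using closed_subspace_nearest_point[OF K] by blast
  then show ?thesis
    using nearest_point_orthogonal[OF K] orthogonal_projection_unique[OF K] by blast
qed

lemma orth_proj_in: "closed_subspace K \<Longrightarrow> orth_proj ip K \<xi> \<in> K"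
  unfolding orth_proj_def using theI'[OF ex1_orthogonal_projection] by blast

lemma orth_proj_orthogonal:
  "closed_subspace K \<Longrightarrow> \<kappa> \<in> K \<Longrightarrow> ip (\<xi> - orth_proj ip K \<xi>) \<kappa> = 0"
  unfolding orth_proj_def using theI'[OF ex1_orthogonal_projection] by blast

lemma orth_proj_eqI:
  assumes "closed_subspace K" "\<eta> \<in> K" "\<forall>\<kappa>\<in>K. ip (\<xi> - \<eta>) \<kappa> = 0"
  shows "orth_proj ip K \<xi> = \<eta>"
  unfolding orth_proj_def using the1_equality[OF ex1_orthogonal_projection] assms by blast

end

section \<open>The conditional expectation on the GNS space\<close>

locale analytical_L2_space =
  fixes smA :: "complex \<Rightarrow> 'a::ring_1 \<Rightarrow> 'a" and stA :: "'a \<Rightarrow> 'a"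
    and smB :: "complex \<Rightarrow> 'b::ring_1 \<Rightarrow> 'b" and stB :: "'b \<Rightarrow> 'b"
    and L R :: "'b \<Rightarrow> 'a" and E :: "'a \<Rightarrow> 'b" and \<tau> :: "'a \<Rightarrow> complex"
    and sH :: "complex \<Rightarrow> 'h::ab_group_add \<Rightarrow> 'h" and ip :: "'h \<Rightarrow> 'h \<Rightarrow> complex"
    and \<iota> :: "'a \<Rightarrow> 'h" and lam :: "'a \<Rightarrow> 'h \<Rightarrow> 'h"
  assumes analytical: "analytical_BB_ncps smA stA smB stB L R E \<tau>"
    and L2: "L2_space smA stA \<tau> sH ip \<iota> lam"
begin

sublocale complex_hilbert_space sH ip
  using L2 unfolding L2_space_def by unfold_locales simp

lemma ncps: "BB_ncps smA stA smB stB L R E"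
  using analytical unfolding analytical_BB_ncps_def by simp

lemma star_algebra_A: "star_algebra smA stA"
  using ncps unfolding BB_ncps_def by simp

lemma L_hom: "unital_star_hom smB stB smA stA L"
  using ncps unfolding BB_ncps_def by simp

lemma R_antihom: "unital_star_antihom smB stB smA stA R"
  using ncps unfolding BB_ncps_def by simp

lemma stA_stA [simp]: "stA (stA x) = x"
  using star_algebra_A unfolding star_algebra_def by simp

lemma stA_mult: "stA (x * y) = stA y * stA x"
  using star_algebra_A unfolding star_algebra_def by simp

lemma stB_stB [simp]: "stB (stB x) = x"
  using ncps unfolding BB_ncps_def star_algebra_def by simp

lemma additive_L: "additive L"
  using L_hom unfolding unital_star_hom_def is_clinear_def additive_def by simp

lemma L_scale: "L (smB c x) = smA c (L x)"
  using L_hom unfolding unital_star_hom_def is_clinear_def by simp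

lemma L_one [simp]: "L 1 = 1"
  using L_hom unfolding unital_star_hom_def by simp

lemma L_mult: "L (x * y) = L x * L y"
  using L_hom unfolding unital_star_hom_def by simp

lemma L_star: "L (stB x) = stA (L x)"
  using L_hom unfolding unital_star_hom_def by simp

lemma R_one [simp]: "R 1 = 1"
  using R_antihom unfolding unital_star_antihom_def by simp

lemma R_star: "R (stB x) = stA (R x)"
  using R_antihom unfolding unital_star_antihom_def by simp

lemma L_R_commute: "L b1 * R b2 = R b2 * L b1"
  using ncps unfolding BB_ncps_def by simp

lemma E_L_R_mult: "E (L b1 * R b2 * a) = b1 * E a * b2"
  using ncps unfolding BB_ncps_def by blast

lemma E_mult_L_eq_mult_R: "E (a * L b) = E (a * R b)"
  using ncps unfolding BB_ncps_def by blast

lemma additive_tau: "additive \<tau>"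
  using analytical unfolding analytical_BB_ncps_def is_state_def is_clinear_def additive_def
  by simp

lemma tau_L_E: "\<tau> a = \<tau> (L (E a))"
  using analytical unfolding analytical_BB_ncps_def by simp

lemma additive_iota: "additive \<iota>"
  using L2 unfolding L2_space_def is_clinear_def additive_def by simp

lemma iota_scale: "\<iota> (smA c x) = sH c (\<iota> x)"
  using L2 unfolding L2_space_def is_clinear_def by simp

lemma ip_iota: "ip (\<iota> x) (\<iota> y) = \<tau> (stA y * x)"
  using L2 unfolding L2_space_def by simp

lemma iota_dense: "0 < e \<Longrightarrow> \<exists>x. hn (\<xi> - \<iota> x) < e"
  using L2 unfolding L2_space_def by simp

lemma lam_iota: "lam a (\<iota> x) = \<iota> (a * x)"
  using L2 unfolding L2_space_def by simp

lemma additive_lam: "additive (lam a)"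
  using L2 unfolding L2_space_def bounded_op_def is_clinear_def additive_def by simp

lemma lam_bounded: "\<exists>C>0. \<forall>x. hn (lam a x) \<le> C * hn x"
proof -
  obtain C where C: "\<forall>x. hn (lam a x) \<le> C * hn x"
    using L2 unfolding L2_space_def bounded_op_def by blast
  have "hn (lam a x) \<le> max C 1 * hn x" for x
    using C hnorm_nonneg[of x] by (meson max.cobounded1 mult_right_mono order_trans)
  then show ?thesis by (intro exI[of _ "max C 1"]) simp
qed

lemma E_L_mult: "E (L b * a) = b * E a"
  using E_L_R_mult[of b 1 a] by simp

lemma tau_mult_R: "\<tau> (x * R b) = \<tau> (x * L b)"
  by (metis tau_L_E E_mult_L_eq_mult_R)

lemma tau_L_mult: "\<tau> (L b * a) = \<tau> (L (b * E a))"
  by (metis tau_L_E E_L_mult)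

lemma tau_L_R: "\<tau> (L b1 * R b2) = \<tau> (L (b1 * b2))"
  using tau_mult_R[of "L b1" b2] by (simp add: L_mult)

lemma tau_L_R_mult: "\<tau> (L b1 * R b2 * a) = \<tau> (L (b1 * E a * b2))"
  by (metis tau_L_E E_L_R_mult)

lemma iota_R: "\<iota> (R b) = \<iota> (L b)"
proof -
  have "ip (\<iota> (R b - L b)) (\<iota> (R b - L b))
      = \<tau> (stA (R b - L b) * R b) - \<tau> (stA (R b - L b) * L b)"
    by (simp add: ip_iota right_diff_distrib additive.diff[OF additive_tau])
  also have "\<dots> = 0" by (simp add: tau_mult_R)
  finally have "\<iota> (R b - L b) = 0" by (rule ip_self_eq_0D)
  then show ?thesis by (simp add: additive.diff[OF additive_iota])
qed

lemma iota_mult_R: "\<iota> (x * R b) = \<iota> (x * L b)"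
  by (metis lam_iota iota_R)

lemma lam_L_R_iota_L: "lam (L b1 * R b2) (\<iota> (L b)) = \<iota> (L (b1 * b * b2))"
proof -
  have "R b2 * L b = L b * R b2" by (rule L_R_commute[symmetric])
  then have "lam (L b1 * R b2) (\<iota> (L b)) = \<iota> (L (b1 * b) * R b2)"
    by (simp add: lam_iota L_mult mult.assoc)
  also have "\<dots> = \<iota> (L (b1 * b * b2))" by (simp add: iota_mult_R L_mult)
  finally show ?thesis .
qed

lemma star_L_R: "stA (L b1 * R b2) = L (stB b1) * R (stB b2)"
  by (simp add: stA_mult L_star R_star L_R_commute)

lemma ip_lam_bound: "\<exists>C. \<forall>u w. cmod (ip (lam a u) w) \<le> C * hn u * hn w"
proof -
  obtain C where C: "\<forall>x. hn (lam a x) \<le> C * hn x" using lam_bounded by blast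
  have "cmod (ip (lam a u) w) \<le> C * hn u * hn w" for u w
    using Cauchy_Schwarz[of "lam a u" w] C hnorm_nonneg[of w]
    by (meson mult_right_mono order_trans)
  then show ?thesis by blast
qed

lemma bounded_additive_zero_by_iota:
  assumes "additive g" "\<And>u. cmod (g u) \<le> M * hn u" "\<And>x. g (\<iota> x) = 0"
  shows "g \<xi> = 0"
  using bounded_additive_zero_by_density[OF assms(1,2)] iota_dense assms(3) by blast

lemma lam_adjoint_iota: "ip (lam a x) (\<iota> y) = ip x (\<iota> (stA a * y))"
proof -
  define g where "g u = ip (lam a u) (\<iota> y) - ip u (\<iota> (stA a * y))" for u
  obtain C where C: "\<forall>u w. cmod (ip (lam a u) w) \<le> C * hn u * hn w" using ip_lam_bound by blast
  have "g x = 0"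
  proof (rule bounded_additive_zero_by_iota)
    show "additive g"
      unfolding g_def additive_def by (simp add: additive.add[OF additive_lam] ip_add_left)
    show "cmod (g u) \<le> (C * hn (\<iota> y) + hn (\<iota> (stA a * y))) * hn u" for u
    proof -
      have "cmod (g u) \<le> cmod (ip (lam a u) (\<iota> y)) + cmod (ip u (\<iota> (stA a * y)))"
        unfolding g_def by (rule norm_triangle_ineq4)
      also have "\<dots> \<le> C * hn u * hn (\<iota> y) + hn u * hn (\<iota> (stA a * y))"
        using C Cauchy_Schwarz by (meson add_mono)
      finally show ?thesis by (simp add: algebra_simps)
    qed
    show "g (\<iota> x') = 0" for x'
      unfolding g_def by (simp add: lam_iota ip_iota stA_mult mult.assoc)
  qed
  then show ?thesis unfolding g_def by simp
qed

lemma lam_adjoint: "ip (lam a x) y = ip x (lam (stA a) y)"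
proof -
  define g where "g v = ip (lam a x) v - ip x (lam (stA a) v)" for v
  obtain C where C: "\<forall>u w. cmod (ip (lam (stA a) u) w) \<le> C * hn u * hn w"
    using ip_lam_bound by blast
  have "g y = 0"
  proof (rule bounded_additive_zero_by_iota)
    show "additive g"
      unfolding g_def additive_def by (simp add: additive.add[OF additive_lam] ip_add_right)
    show "cmod (g u) \<le> (hn (lam a x) + C * hn x) * hn u" for u
    proof -
      have "cmod (g u) \<le> cmod (ip (lam a x) u) + cmod (ip (lam (stA a) u) x)"
        unfolding g_def using norm_triangle_ineq4 by (metis complex_mod_cnj ip_cnj)
      also have "\<dots> \<le> hn (lam a x) * hn u + C * hn u * hn x"
        using C Cauchy_Schwarz by (meson add_mono)
      finally show ?thesis by (simp add: algebra_simps)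
    qed
    show "g (\<iota> y') = 0" for y'
      unfolding g_def by (simp add: lam_iota lam_adjoint_iota)
  qed
  then show ?thesis unfolding g_def by simp
qed

abbreviation L2_B :: "'h set" where "L2_B \<equiv> L2B ip \<iota> L"

abbreviation E_tilde :: "'h \<Rightarrow> 'h" where "E_tilde \<equiv> orth_proj ip L2_B"

lemma iota_L_in_L2B: "\<iota> (L b) \<in> L2_B"
  unfolding L2B_def by (auto intro!: exI[of _ b] simp: hnorm_def)

lemma L2B_approx: "\<zeta> \<in> L2_B \<Longrightarrow> 0 < e \<Longrightarrow> \<exists>b. hn (\<zeta> - \<iota> (L b)) < e"
  unfolding L2B_def by blast

lemma L2B_closed:
  assumes "\<And>e. 0 < e \<Longrightarrow> \<exists>\<kappa>\<in>L2_B. hn (\<xi> - \<kappa>) < e"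
  shows "\<xi> \<in> L2_B"
  unfolding L2B_def
proof (intro CollectI allI impI)
  fix e :: real assume "0 < e"
  then obtain \<kappa> where \<kappa>: "\<kappa> \<in> L2_B" "hn (\<xi> - \<kappa>) < e / 2" using assms[of "e / 2"] by auto
  then obtain b where "hn (\<kappa> - \<iota> (L b)) < e / 2"
    using L2B_approx[OF \<kappa>(1), of "e / 2"] \<open>0 < e\<close> by auto
  then show "\<exists>b. hn (\<xi> - \<iota> (L b)) < e"
    using \<kappa> hnorm_triangle_diff[of \<xi> "\<iota> (L b)" \<kappa>] by (intro exI[of _ b]) linarith
qed

lemma L2B_add:
  assumes "x \<in> L2_B" "y \<in> L2_B"
  shows "x + y \<in> L2_B"
  unfolding L2B_def
proof (intro CollectI allI impI)
  fix e :: real assume "0 < e"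
  obtain b1 b2 where b: "hn (x - \<iota> (L b1)) < e / 2" "hn (y - \<iota> (L b2)) < e / 2"
    using L2B_approx assms \<open>0 < e\<close> by (meson half_gt_zero)
  have "x + y - \<iota> (L (b1 + b2)) = (x - \<iota> (L b1)) + (y - \<iota> (L b2))"
    by (simp add: additive.add[OF additive_L] additive.add[OF additive_iota])
  then have "hn (x + y - \<iota> (L (b1 + b2))) \<le> hn (x - \<iota> (L b1)) + hn (y - \<iota> (L b2))"
    by (simp only: hnorm_triangle)
  then have "hn (x + y - \<iota> (L (b1 + b2))) < e" using b by linarith
  then show "\<exists>b. hn (x + y - \<iota> (L b)) < e" by blast
qed

lemma L2B_scale:
  assumes "x \<in> L2_B"
  shows "sH c x \<in> L2_B"
  unfolding L2B_def
proof (intro CollectI allI impI)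
  fix e :: real assume "0 < e"
  then have "0 < e / (cmod c + 1)" by (simp add: add_nonneg_pos)
  then obtain b where b: "hn (x - \<iota> (L b)) < e / (cmod c + 1)" using L2B_approx[OF assms] by blast
  have "hn (sH c x - \<iota> (L (smB c b))) = cmod c * hn (x - \<iota> (L b))"
    by (simp add: L_scale iota_scale scale_right_diff_distrib[symmetric] hnorm_scale)
  also have "\<dots> \<le> (cmod c + 1) * hn (x - \<iota> (L b))" using hnorm_nonneg by (simp add: mult_right_mono)
  also have "\<dots> < e" using b by (simp add: pos_less_divide_eq mult.commute add_nonneg_pos)
  finally show "\<exists>b. hn (sH c x - \<iota> (L b)) < e" by blast
qed

lemma closed_subspace_L2B: "closed_subspace L2_B"
  unfolding closed_subspace_def
  using iota_L_in_L2B[of 0] L2B_add L2B_scale L2B_closed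
  by (simp add: additive.zero[OF additive_L] additive.zero[OF additive_iota])

lemma lam_L2B:
  assumes T: "\<And>b. \<exists>b'. lam T (\<iota> (L b)) = \<iota> (L b')" and "\<zeta> \<in> L2_B"
  shows "lam T \<zeta> \<in> L2_B"
proof (rule L2B_closed)
  fix e :: real assume "0 < e"
  obtain C where C: "0 < C" "\<forall>x. hn (lam T x) \<le> C * hn x" using lam_bounded by blast
  obtain b where b: "hn (\<zeta> - \<iota> (L b)) < e / C"
    using L2B_approx[OF \<open>\<zeta> \<in> L2_B\<close>, of "e / C"] \<open>0 < e\<close> C(1) by auto
  obtain b' where b': "lam T (\<iota> (L b)) = \<iota> (L b')" using T by blast
  have "hn (lam T \<zeta> - \<iota> (L b')) = hn (lam T (\<zeta> - \<iota> (L b)))"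
    by (simp add: additive.diff[OF additive_lam] b')
  also have "\<dots> \<le> C * hn (\<zeta> - \<iota> (L b))" using C by blast
  also have "\<dots> < e" using b C by (simp add: pos_less_divide_eq mult.commute)
  finally show "\<exists>\<kappa>\<in>L2_B. hn (lam T \<zeta> - \<kappa>) < e" using iota_L_in_L2B by blast
qed

lemma orthogonal_L2B:
  assumes "\<And>b. ip x (\<iota> (L b)) = 0" and "\<kappa> \<in> L2_B"
  shows "ip x \<kappa> = 0"
proof (rule bounded_additive_zero_by_density[where M = "hn x"])
  show "additive (ip x)" by (simp add: additive_def ip_add_right)
  show "cmod (ip x u) \<le> hn x * hn u" for u by (rule Cauchy_Schwarz)
  show "\<exists>s. ip x s = 0 \<and> hn (\<kappa> - s) < e" if "0 < e" for e
    using L2B_approx[OF assms(2) that] assms(1) by blast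
qed

lemma E_tilde_in_L2B: "E_tilde \<xi> \<in> L2_B"
  by (rule orth_proj_in[OF closed_subspace_L2B])

lemma E_tilde_orthogonal_L: "ip (\<xi> - E_tilde \<xi>) (\<iota> (L b)) = 0"
  by (rule orth_proj_orthogonal[OF closed_subspace_L2B iota_L_in_L2B])

lemma E_tilde_eqI:
  assumes "\<eta> \<in> L2_B" "\<And>b. ip (\<xi> - \<eta>) (\<iota> (L b)) = 0"
  shows "E_tilde \<xi> = \<eta>"
  using orth_proj_eqI[OF closed_subspace_L2B assms(1)] orthogonal_L2B assms(2) by blast

lemma E_tilde_eq_if_ip_L_eq:
  assumes "\<And>b. ip \<xi>1 (\<iota> (L b)) = ip \<xi>2 (\<iota> (L b))"
  shows "E_tilde \<xi>1 = E_tilde \<xi>2"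
proof (rule E_tilde_eqI[OF E_tilde_in_L2B])
  show "ip (\<xi>1 - E_tilde \<xi>2) (\<iota> (L b)) = 0" for b
    using assms[of b] E_tilde_orthogonal_L[of \<xi>2 b] by (simp add: ip_diff_left)
qed

lemma tauH_E_tilde: "tauH ip \<iota> (E_tilde \<xi>) = tauH ip \<iota> \<xi>"
  using E_tilde_orthogonal_L[of \<xi> 1] unfolding tauH_def by (simp add: ip_diff_left)

lemma E_tilde_lam_L_R: "E_tilde (lam (L b1 * R b2) \<xi>) = lam (L b1 * R b2) (E_tilde \<xi>)"
proof (rule E_tilde_eqI)
  show "lam (L b1 * R b2) (E_tilde \<xi>) \<in> L2_B"
    using lam_L2B lam_L_R_iota_L E_tilde_in_L2B by blast
  show "ip (lam (L b1 * R b2) \<xi> - lam (L b1 * R b2) (E_tilde \<xi>)) (\<iota> (L b)) = 0" for b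
    using E_tilde_orthogonal_L[of \<xi> "stB b1 * b * stB b2"]
    by (simp add: additive.diff[OF additive_lam, symmetric] lam_adjoint star_L_R lam_L_R_iota_L)
qed

lemma E_tilde_lam_eqI:
  assumes T: "\<And>b. \<exists>b'. lam T (\<iota> (L b)) = \<iota> (L b')"
    and moments: "\<And>b c. \<tau> (L c * a * L b) = \<tau> (L c * T * L b)"
    and "\<zeta> \<in> L2_B"
  shows "E_tilde (lam a \<zeta>) = lam T \<zeta>"
proof (rule E_tilde_eqI)
  show "lam T \<zeta> \<in> L2_B" by (rule lam_L2B[OF T \<open>\<zeta> \<in> L2_B\<close>])
  fix c
  define w where "w = lam (stA a) (\<iota> (L c)) - lam (stA T) (\<iota> (L c))"
  have "ip (\<iota> (L b)) w = ip (lam a (\<iota> (L b))) (\<iota> (L c)) - ip (lam T (\<iota> (L b))) (\<iota> (L c))" for b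
    unfolding w_def by (simp add: ip_diff_right lam_adjoint)
  also have "\<dots> b = 0" for b
    using moments[where b = b and c = "stB c"] by (simp add: lam_iota ip_iota L_star mult.assoc)
  finally have "ip w (\<iota> (L b)) = 0" for b by (metis ip_cnj complex_cnj_zero)
  then have "ip w \<zeta> = 0" using orthogonal_L2B \<open>\<zeta> \<in> L2_B\<close> by blast
  then show "ip (lam a \<zeta> - lam T \<zeta>) (\<iota> (L c)) = 0"
    unfolding w_def by (metis ip_cnj complex_cnj_zero ip_diff_left ip_diff_right lam_adjoint)
qed

lemma E_tilde_lam_left_alg:
  assumes "a \<in> left_alg R" "\<zeta> \<in> L2_B"
  shows "E_tilde (lam a \<zeta>) = lam (L (E a)) \<zeta>"
proof (rule E_tilde_lam_eqI[OF _ _ assms(2)])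
  show "\<exists>b'. lam (L (E a)) (\<iota> (L b)) = \<iota> (L b')" for b
    by (intro exI[of _ "E a * b"]) (simp add: lam_iota L_mult)
  show "\<tau> (L c * a * L b) = \<tau> (L c * L (E a) * L b)" for b c
  proof -
    have "\<tau> (L c * a * L b) = \<tau> (L c * a * R b)" by (rule tau_mult_R[symmetric])
    also have "\<dots> = \<tau> (L c * R b * a)"
      using assms(1) unfolding left_alg_def by (simp add: mult.assoc)
    also have "\<dots> = \<tau> (L c * L (E a) * L b)" by (simp add: tau_L_R_mult L_mult)
    finally show ?thesis .
  qed
qed

lemma E_tilde_lam_right_alg:
  assumes "a \<in> right_alg L" "\<zeta> \<in> L2_B"
  shows "E_tilde (lam a \<zeta>) = lam (R (E a)) \<zeta>"
proof (rule E_tilde_lam_eqI[OF _ _ assms(2)])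
  show "\<exists>b'. lam (R (E a)) (\<iota> (L b)) = \<iota> (L b')" for b
    by (intro exI[of _ "b * E a"]) (simp add: lam_iota L_R_commute[symmetric] iota_mult_R L_mult)
  show "\<tau> (L c * a * L b) = \<tau> (L c * R (E a) * L b)" for b c
  proof -
    have "\<tau> (L c * a * L b) = \<tau> (L (c * b) * a)"
      using assms(1) unfolding right_alg_def by (simp add: L_mult mult.assoc)
    also have "\<dots> = \<tau> (L (c * b) * R (E a))" unfolding tau_L_R by (rule tau_L_mult)
    also have "\<dots> = \<tau> (L c * R (E a) * L b)"
      using L_R_commute[of b "E a"] by (simp add: L_mult mult.assoc)
    finally show ?thesis .
  qed
qed

lemma tauH_lam_L: "tauH ip \<iota> (lam (L b) \<xi>) = ip \<xi> (\<iota> (L (stB b)))"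
  unfolding tauH_def by (simp add: lam_adjoint lam_iota L_star)

lemma tauH_lam_R: "tauH ip \<iota> (lam (R b) \<xi>) = ip \<xi> (\<iota> (L (stB b)))"
  unfolding tauH_def by (simp add: lam_adjoint lam_iota R_star[symmetric] iota_R)

lemma E_tilde_eq_if_tauH_lam_L:
  assumes "\<And>b. tauH ip \<iota> (lam (L b) \<xi>1) = tauH ip \<iota> (lam (L b) \<xi>2)"
  shows "E_tilde \<xi>1 = E_tilde \<xi>2"
  using assms[of "stB b" for b] by (intro E_tilde_eq_if_ip_L_eq) (simp add: tauH_lam_L)

lemma E_tilde_eq_if_tauH_lam_R:
  assumes "\<And>b. tauH ip \<iota> (lam (R b) \<xi>1) = tauH ip \<iota> (lam (R b) \<xi>2)"
  shows "E_tilde \<xi>1 = E_tilde \<xi>2"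
  using assms[of "stB b" for b] by (intro E_tilde_eq_if_ip_L_eq) (simp add: tauH_lam_R)

end

theorem proposition3p9:
  fixes smA :: "complex \<Rightarrow> 'a::ring_1 \<Rightarrow> 'a" and stA :: "'a \<Rightarrow> 'a"
    and smB :: "complex \<Rightarrow> 'b::ring_1 \<Rightarrow> 'b" and stB :: "'b \<Rightarrow> 'b"
    and L R :: "'b \<Rightarrow> 'a" and E :: "'a \<Rightarrow> 'b" and \<tau> :: "'a \<Rightarrow> complex"
    and sH :: "complex \<Rightarrow> 'h::ab_group_add \<Rightarrow> 'h" and ip :: "'h \<Rightarrow> 'h \<Rightarrow> complex"
    and \<iota> :: "'a \<Rightarrow> 'h" and lam :: "'a \<Rightarrow> 'h \<Rightarrow> 'h"
  assumes "analytical_BB_ncps smA stA smB stB L R E \<tau>"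
    and "L2_space smA stA \<tau> sH ip \<iota> lam"
  defines "Et \<equiv> orth_proj ip (L2B ip \<iota> L)"
  shows
    "(\<forall>\<xi>. tauH ip \<iota> \<xi> = tauH ip \<iota> (Et \<xi>)) \<and>
     (\<forall>a b. Et (\<iota> (a * L b)) = Et (\<iota> (a * R b))) \<and>
     (\<forall>b1 b2 \<xi>. Et (lam (L b1 * R b2) \<xi>) = lam (L b1 * R b2) (Et \<xi>)) \<and>
     (\<forall>a \<zeta>. a \<in> left_alg R \<longrightarrow> \<zeta> \<in> L2B ip \<iota> L \<longrightarrow> Et (lam a \<zeta>) = lam (L (E a)) \<zeta>) \<and>
     (\<forall>a \<zeta>. a \<in> right_alg L \<longrightarrow> \<zeta> \<in> L2B ip \<iota> L \<longrightarrow> Et (lam a \<zeta>) = lam (R (E a)) \<zeta>) \<and>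
     (\<forall>\<xi>1 \<xi>2. (\<forall>b. tauH ip \<iota> (lam (L b) \<xi>1) = tauH ip \<iota> (lam (L b) \<xi>2)) \<longrightarrow> Et \<xi>1 = Et \<xi>2) \<and>
     (\<forall>\<xi>1 \<xi>2. (\<forall>b. tauH ip \<iota> (lam (R b) \<xi>1) = tauH ip \<iota> (lam (R b) \<xi>2)) \<longrightarrow> Et \<xi>1 = Et \<xi>2)"
proof -
  interpret analytical_L2_space smA stA smB stB L R E \<tau> sH ip \<iota> lam
    using assms(1,2) by (rule analytical_L2_space.intro)
  show ?thesis
    unfolding Et_def
    by (auto simp: tauH_E_tilde iota_mult_R E_tilde_lam_L_R E_tilde_lam_left_alg
        E_tilde_lam_right_alg intro: E_tilde_eq_if_tauH_lam_L E_tilde_eq_if_tauH_lam_R)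
qed

end
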